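(* Fix a parameter space $W$, a data space $X$, an update rule $g: W\times X\to W$, a metric $d$ on $W$ and initial parameters $\mathbf{w}_0\in W$. Two datasets $D, D'\subseteq X$ are forgeable with $\epsilon=0$ if and only if $H_D(W)=H_{D'}(W)$, where $H_D(W)$ denotes the set of parameter sequences $\{\mathbf{w}_i\}_{i\in J}$ of all logs in $H_{D,g,d,0}$.
   Context: A valid $(g,d,\epsilon)$ log is a sequence $\{(\mathbf{w}_i,\mathbf{x}_i)\}_{i\in J}$ ($J$ a countable index set, consecutive indices) such that $d(\mathbf{w}_{i+1}, g(\mathbf{w}_i,\mathbf{x}_i))\le \epsilon$ for all $i\in J$. For a dataset $D$, $H_{D,g,d,\epsilon}$ is the set of all valid $(g,d,\epsilon)$ logs starting from $\mathbf{w}_0$ whose data points all lie in $D$. A forging map from $D$ to $D'$ (with $\epsilon$) is a map $B: H_{D,g,d,0}\to H_{D',g,d,\epsilon}$ with $B(\{(\mathbf{w}_i,\mathbf{x}_i)\}_{i\in J})=\{(\mathbf{w}_i,\tilde{\mathbf{x}}_i)\}_{i\in J}$, $\tilde{\mathbf{x}}_i\in D'$, the output being a valid $(g,d,\epsilon)$ log. $D$ and $D'$ are forgeable with $\epsilon$ if there is a forging map from $D$ to $D'$ and one from $D'$ to $D$, both with $\epsilon$. *)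

theory Defs
  imports "HOL-Library.Extended_Nat"
begin

text \<open>A log is a pair (L, s): the index set is J = {i. enat i < L} (consecutive indices
starting at 0, finite or countably infinite), and s i = (w_i, x_i) for i in J.
Entries outside J are required to be undefined, so logs are determined by their entries in J.\<close>

type_synonym ('w, 'x) log = "enat \<times> (nat \<Rightarrow> 'w \<times> 'x)"

definition is_metric :: "('w \<Rightarrow> 'w \<Rightarrow> real) \<Rightarrow> bool" where
  "is_metric d \<longleftrightarrow> (\<forall>a b. 0 \<le> d a b) \<and> (\<forall>a b. d a b = 0 \<longleftrightarrow> a = b)
     \<and> (\<forall>a b. d a b = d b a) \<and> (\<forall>a b c. d a c \<le> d a b + d b c)"

definition valid_log ::
  "('w \<Rightarrow> 'x \<Rightarrow> 'w) \<Rightarrow> ('w \<Rightarrow> 'w \<Rightarrow> real) \<Rightarrow> real \<Rightarrow> ('w, 'x) log \<Rightarrow> bool" where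
  "valid_log g d \<epsilon> l \<longleftrightarrow>
     (\<forall>i. enat (Suc i) < fst l \<longrightarrow>
        d (fst (snd l (Suc i))) (g (fst (snd l i)) (snd (snd l i))) \<le> \<epsilon>)"

definition H_set ::
  "('w \<Rightarrow> 'x \<Rightarrow> 'w) \<Rightarrow> ('w \<Rightarrow> 'w \<Rightarrow> real) \<Rightarrow> real \<Rightarrow> 'w \<Rightarrow> 'x set \<Rightarrow> ('w, 'x) log set" where
  "H_set g d \<epsilon> w0 D = {l. 0 < fst l \<and> fst (snd l 0) = w0
      \<and> (\<forall>i. enat i < fst l \<longrightarrow> snd (snd l i) \<in> D)
      \<and> (\<forall>i. \<not> enat i < fst l \<longrightarrow> snd l i = undefined)
      \<and> valid_log g d \<epsilon> l}"

definition params :: "('w, 'x) log \<Rightarrow> enat \<times> (nat \<Rightarrow> 'w)" where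
  "params l = (fst l, \<lambda>i. if enat i < fst l then fst (snd l i) else undefined)"

definition HW ::
  "('w \<Rightarrow> 'x \<Rightarrow> 'w) \<Rightarrow> ('w \<Rightarrow> 'w \<Rightarrow> real) \<Rightarrow> 'w \<Rightarrow> 'x set \<Rightarrow> (enat \<times> (nat \<Rightarrow> 'w)) set" where
  "HW g d w0 D = params ` H_set g d 0 w0 D"

definition forging_map ::
  "('w \<Rightarrow> 'x \<Rightarrow> 'w) \<Rightarrow> ('w \<Rightarrow> 'w \<Rightarrow> real) \<Rightarrow> real \<Rightarrow> 'w \<Rightarrow> 'x set \<Rightarrow> 'x set
    \<Rightarrow> (('w, 'x) log \<Rightarrow> ('w, 'x) log) \<Rightarrow> bool" where
  "forging_map g d \<epsilon> w0 D D' B \<longleftrightarrow>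
     (\<forall>l \<in> H_set g d 0 w0 D. B l \<in> H_set g d \<epsilon> w0 D' \<and> fst (B l) = fst l
        \<and> (\<forall>i. enat i < fst l \<longrightarrow> fst (snd (B l) i) = fst (snd l i)))"

definition forgeable ::
  "('w \<Rightarrow> 'x \<Rightarrow> 'w) \<Rightarrow> ('w \<Rightarrow> 'w \<Rightarrow> real) \<Rightarrow> real \<Rightarrow> 'w \<Rightarrow> 'x set \<Rightarrow> 'x set \<Rightarrow> bool" where
  "forgeable g d \<epsilon> w0 D D' \<longleftrightarrow>
     (\<exists>B. forging_map g d \<epsilon> w0 D D' B) \<and> (\<exists>B. forging_map g d \<epsilon> w0 D' D B)"

end

theory Submission
  imports Defs
begin

text \<open>A forging map only has to reproduce the parameter sequence of each honest log, so it
exists exactly when every honest parameter sequence over \<open>D\<close> is also the parameter sequence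
of some \<open>\<epsilon>\<close>-valid log over \<open>D'\<close>; a forging map is then obtained by choice. For \<open>\<epsilon> = 0\<close> this
says \<open>H\<^sub>D(W) \<subseteq> H\<^sub>D\<^sub>'(W)\<close>, and the two directions of forgeability give the two inclusions.\<close>

lemma params_eq_iff:
  "params l' = params l \<longleftrightarrow> fst l' = fst l \<and> (\<forall>i. enat i < fst l \<longrightarrow> fst (snd l' i) = fst (snd l i))"
  unfolding params_def by (auto simp: fun_eq_iff)

lemma forging_map_iff_params_subset:
  fixes g :: "'w \<Rightarrow> 'x \<Rightarrow> 'w"
  shows "(\<exists>B. forging_map g d \<epsilon> w0 D D' B) \<longleftrightarrow> HW g d w0 D \<subseteq> params ` H_set g d \<epsilon> w0 D'"
proof
  assume "\<exists>B. forging_map g d \<epsilon> w0 D D' B"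
  then obtain B where B: "forging_map g d \<epsilon> w0 D D' B" ..
  show "HW g d w0 D \<subseteq> params ` H_set g d \<epsilon> w0 D'"
  proof
    fix p assume "p \<in> HW g d w0 D"
    then obtain l where l: "l \<in> H_set g d 0 w0 D" and p: "p = params l"
      unfolding HW_def by blast
    have "B l \<in> H_set g d \<epsilon> w0 D'" "params (B l) = params l"
      using B l unfolding forging_map_def params_eq_iff by auto
    then show "p \<in> params ` H_set g d \<epsilon> w0 D'"
      unfolding p by (metis image_eqI)
  qed
next
  assume sub: "HW g d w0 D \<subseteq> params ` H_set g d \<epsilon> w0 D'"
  define B :: "('w, 'x) log \<Rightarrow> ('w, 'x) log"
    where "B l = (SOME l'. l' \<in> H_set g d \<epsilon> w0 D' \<and> params l' = params l)" for l
  have "forging_map g d \<epsilon> w0 D D' B"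
    unfolding forging_map_def
  proof
    fix l assume "l \<in> H_set g d 0 w0 D"
    then have "\<exists>l'. l' \<in> H_set g d \<epsilon> w0 D' \<and> params l' = params l"
      using sub unfolding HW_def by (metis image_eqI image_iff subsetD)
    then have "B l \<in> H_set g d \<epsilon> w0 D' \<and> params (B l) = params l"
      unfolding B_def by (rule someI_ex)
    then show "B l \<in> H_set g d \<epsilon> w0 D' \<and> fst (B l) = fst l
        \<and> (\<forall>i. enat i < fst l \<longrightarrow> fst (snd (B l) i) = fst (snd l i))"
      unfolding params_eq_iff by blast
  qed
  then show "\<exists>B. forging_map g d \<epsilon> w0 D D' B" by blast
qed

theorem theorem1:
  fixes g :: "'w \<Rightarrow> 'x \<Rightarrow> 'w" and d :: "'w \<Rightarrow> 'w \<Rightarrow> real"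
    and w0 :: 'w and D D' :: "'x set"
  assumes "is_metric d"
  shows "forgeable g d 0 w0 D D' \<longleftrightarrow> HW g d w0 D = HW g d w0 D'"
  unfolding forgeable_def forging_map_iff_params_subset HW_def[symmetric]
  by blast

end
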